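(* Let $N\ge2$, $n=\binom N2$, and for $y\in\mathcal{C}_n$ let $f(y)=\frac1N T(G_y)$, where $T(G)$ is the number of triangles in the graph $G$. Then $\mathcal{D}(f)\le 5n^{3/4}$ and $\mathrm{Lip}(f)\le1$.
   Context: Points $y=(y_{i,j})_{1\le i<j\le N}\in\{-1,1\}^{\binom N2}=\mathcal{C}_n$ are identified with graphs $G_y=([N],E)$ where $(i,j)\in E$ iff $y_{i,j}=1$. For $g:\mathcal{C}_n\to\mathbb{R}$, $\partial_{i} g(y)$ is half the difference of $g$ at $y$ with the $i$-th coordinate set to $+1$ and to $-1$; $\nabla g=(\partial_i g)_i$; $\mathrm{Lip}(g)=\max_{i,y}|\partial_i g(y)|$; $\mathbf{GW}(K)=\mathbb{E}\sup_{x\in K}\langle x,\Gamma\rangle$ with $\Gamma$ standard Gaussian in $\mathbb{R}^n$; $\mathcal{D}(g)=\mathbf{GW}(\{\nabla g(y):y\in\mathcal{C}_n\}\cup\{0\})$. *)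

theory Defs
  imports "HOL-Probability.Probability"
begin

definition edges :: "nat \<Rightarrow> (nat \<times> nat) set" where
  "edges N = {(i, j). 1 \<le> i \<and> i < j \<and> j \<le> N}"

definition cube :: "nat \<Rightarrow> ((nat \<times> nat) \<Rightarrow> real) set" where
  "cube N = edges N \<rightarrow>\<^sub>E {-1, 1}"

definition dpartial :: "(((nat \<times> nat) \<Rightarrow> real) \<Rightarrow> real) \<Rightarrow> nat \<times> nat \<Rightarrow> ((nat \<times> nat) \<Rightarrow> real) \<Rightarrow> real" where
  "dpartial g e y = (g (y(e := 1)) - g (y(e := -1))) / 2"

definition dgrad :: "nat \<Rightarrow> (((nat \<times> nat) \<Rightarrow> real) \<Rightarrow> real) \<Rightarrow> ((nat \<times> nat) \<Rightarrow> real) \<Rightarrow> ((nat \<times> nat) \<Rightarrow> real)" where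
  "dgrad N g y = (\<lambda>e\<in>edges N. dpartial g e y)"

definition Lip :: "nat \<Rightarrow> (((nat \<times> nat) \<Rightarrow> real) \<Rightarrow> real) \<Rightarrow> real" where
  "Lip N g = Max {\<bar>dpartial g e y\<bar> | e y. e \<in> edges N \<and> y \<in> cube N}"

definition std_gaussian :: "'i set \<Rightarrow> ('i \<Rightarrow> real) measure" where
  "std_gaussian I = PiM I (\<lambda>_. density lborel std_normal_density)"

definition GW :: "'i set \<Rightarrow> ('i \<Rightarrow> real) set \<Rightarrow> real" where
  "GW I K = (\<integral>\<Gamma>. (SUP x\<in>K. (\<Sum>e\<in>I. x e * \<Gamma> e)) \<partial>std_gaussian I)"

definition DD :: "nat \<Rightarrow> (((nat \<times> nat) \<Rightarrow> real) \<Rightarrow> real) \<Rightarrow> real" where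
  "DD N g = GW (edges N) (dgrad N g ` cube N \<union> {(\<lambda>e\<in>edges N. 0)})"

definition triangles :: "nat \<Rightarrow> ((nat \<times> nat) \<Rightarrow> real) \<Rightarrow> nat" where
  "triangles N y = card {(i, j, k). 1 \<le> i \<and> i < j \<and> j < k \<and> k \<le> N \<and>
      y (i, j) = 1 \<and> y (i, k) = 1 \<and> y (j, k) = 1}"

end

theory Submission
  imports Defs
begin

text \<open>Flipping the edge \<open>ij\<close> changes the triangle count by the number of common neighbours
  of \<open>i\<close> and \<open>j\<close>, so every partial derivative of \<open>f\<close> lies in \<open>[0, 1/2]\<close>. Counting each
  common neighbour \<open>k\<close> as an apex, \<open>2N \<langle>\<nabla>f(y), \<Gamma>\<rangle> = \<Sum>\<^sub>k \<langle>\<chi>(N(k)), \<Gamma>\<rangle>\<close>, where \<open>\<chi>(S)\<close> is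
  the edge indicator of the clique on \<open>S\<close> and \<open>N(k)\<close> the neighbourhood of \<open>k\<close>. So every gradient is
  dominated by one of the \<open>2\<^sup>N\<close> vectors \<open>\<chi>(S)/2\<close>, whose squared norms are at most \<open>N\<^sup>2/4\<close>,
  and the exponential-moment bound for the maximum of finitely many Gaussians gives
  \<open>D(f) \<le> (3/4) N\<^sup>3\<^sup>/\<^sup>2 \<le> 5 n\<^sup>3\<^sup>/\<^sup>4\<close>.\<close>

lemma std_normal_density_mult_exp:
  "std_normal_density x * exp (a * x) = exp (a\<^sup>2 / 2) * normal_density a 1 x"
  unfolding normal_density_def
  by (simp add: exp_add[symmetric] power2_eq_square algebra_simps diff_divide_distrib add_divide_distrib)

lemma integrable_exp_mult_std_normal:
  "integrable (density lborel std_normal_density) (\<lambda>x. exp (a * x))"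
  by (subst integrable_density) (auto simp: std_normal_density_mult_exp)

lemma integral_exp_mult_std_normal:
  "(\<integral>x. exp (a * x) \<partial>density lborel std_normal_density) = exp (a\<^sup>2 / 2)"
  by (subst integral_density) (auto simp: std_normal_density_mult_exp)

lemma prob_space_std_gaussian: "prob_space (std_gaussian I)"
  unfolding std_gaussian_def by (intro prob_space_PiM prob_space_normal_density) simp

lemma
  fixes a :: "'i \<Rightarrow> real"
  assumes "finite I"
  shows integrable_exp_inner_std_gaussian:
      "integrable (std_gaussian I) (\<lambda>G. exp (\<Sum>e\<in>I. a e * G e))"
    and integral_exp_inner_std_gaussian:
      "(\<integral>G. exp (\<Sum>e\<in>I. a e * G e) \<partial>std_gaussian I) = exp ((\<Sum>e\<in>I. (a e)\<^sup>2) / 2)"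
proof -
  interpret product_sigma_finite "\<lambda>_. density lborel std_normal_density"
    unfolding product_sigma_finite_def
    by (simp add: prob_space_imp_sigma_finite prob_space_normal_density)
  have prod: "(\<lambda>G. exp (\<Sum>e\<in>I. a e * G e)) = (\<lambda>G. \<Prod>e\<in>I. exp (a e * G e))"
    using assms by (simp add: exp_sum)
  show "integrable (std_gaussian I) (\<lambda>G. exp (\<Sum>e\<in>I. a e * G e))"
    unfolding prod std_gaussian_def using assms
    by (intro product_integrable_prod integrable_exp_mult_std_normal)
  show "(\<integral>G. exp (\<Sum>e\<in>I. a e * G e) \<partial>std_gaussian I) = exp ((\<Sum>e\<in>I. (a e)\<^sup>2) / 2)"
    unfolding prod std_gaussian_def using assms
    by (subst product_integral_prod)
       (auto simp: integrable_exp_mult_std_normal integral_exp_mult_std_normal exp_sum sum_divide_distrib)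
qed

text \<open>The exponential-moment (soft-max) bound: for \<open>t > 0\<close>,
  \<open>t \<langle>a, G\<rangle> \<le> L - 1 + exp (t \<langle>a, G\<rangle> - L)\<close>, and the exponential terms summed over \<open>A\<close>
  have expectation at most \<open>exp L\<close>.\<close>
lemma integral_std_gaussian_le_finite_family:
  fixes A :: "('i \<Rightarrow> real) set" and X :: "('i \<Rightarrow> real) \<Rightarrow> real"
  assumes I: "finite I" and A: "finite A" "A \<noteq> {}"
    and norm: "\<And>a. a \<in> A \<Longrightarrow> (\<Sum>e\<in>I. (a e)\<^sup>2) \<le> s"
    and t: "t > 0"
    and L: "real (card A) * exp (t\<^sup>2 * s / 2) \<le> exp L"
    and dominated: "\<And>G. \<exists>a\<in>A. X G \<le> (\<Sum>e\<in>I. a e * G e)"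
  shows "(\<integral>G. X G \<partial>std_gaussian I) \<le> L / t"
proof -
  interpret prob_space "std_gaussian I" by (rule prob_space_std_gaussian)
  define Z where "Z G = (\<Sum>a\<in>A. exp (\<Sum>e\<in>I. (t * a e) * G e))" for G :: "'i \<Rightarrow> real"
  have exp_inner_eq: "exp (\<Sum>e\<in>I. (t * a e) * G e) = exp (t * (\<Sum>e\<in>I. a e * G e))" for a G
    by (simp add: sum_distrib_left mult.assoc)
  have pointwise: "t * X G \<le> L - 1 + Z G / exp L" for G
  proof -
    obtain a where a: "a \<in> A" "X G \<le> (\<Sum>e\<in>I. a e * G e)" using dominated by blast
    define u where "u = t * (\<Sum>e\<in>I. a e * G e)"
    have "t * X G \<le> u" using a t by (simp add: u_def)
    also have "u \<le> L - 1 + exp (u - L)"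
      using exp_ge_add_one_self[of "u - L"] by linarith
    also have "exp (u - L) \<le> Z G / exp L"
      unfolding exp_diff Z_def u_def exp_inner_eq
      by (intro divide_right_mono member_le_sum[where f="\<lambda>a. exp (t * (\<Sum>e\<in>I. a e * G e))"])
         (use a A in auto)
    finally show ?thesis by simp
  qed
  have int_Z: "integrable (std_gaussian I) Z"
    unfolding Z_def using I by (intro Bochner_Integration.integrable_sum integrable_exp_inner_std_gaussian)
  have "(\<integral>G. Z G \<partial>std_gaussian I) = (\<Sum>a\<in>A. exp (t\<^sup>2 * (\<Sum>e\<in>I. (a e)\<^sup>2) / 2))"
    unfolding Z_def using I
    by (simp add: Bochner_Integration.integral_sum integrable_exp_inner_std_gaussian
        integral_exp_inner_std_gaussian power_mult_distrib sum_distrib_left)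
  also have "\<dots> \<le> (\<Sum>a\<in>A. exp (t\<^sup>2 * s / 2))"
    using norm by (intro sum_mono) (simp add: mult_left_mono)
  also have "\<dots> \<le> exp L" using L by simp
  finally have EZ: "(\<integral>G. Z G \<partial>std_gaussian I) \<le> exp L" .
  have L_nonneg: "L \<ge> 0"
  proof -
    have "1 \<le> real (card A)" using A by (simp add: Suc_leI card_gt_0_iff)
    moreover have "s \<ge> 0"
    proof -
      obtain a where "a \<in> A" using A by blast
      then show ?thesis using norm[of a] sum_nonneg[of I "\<lambda>e. (a e)\<^sup>2"] by simp
    qed
    then have "1 \<le> exp (t\<^sup>2 * s / 2)" by simp
    ultimately have "1 * 1 \<le> exp L" using L by (meson mult_mono order_trans zero_le_one)
    then show ?thesis by simp
  qed
  show ?thesis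
  proof (cases "integrable (std_gaussian I) X")
    case True
    have "t * (\<integral>G. X G \<partial>std_gaussian I) = (\<integral>G. t * X G \<partial>std_gaussian I)" by simp
    also have "\<dots> \<le> (\<integral>G. L - 1 + Z G / exp L \<partial>std_gaussian I)"
      using True int_Z pointwise by (intro integral_mono) auto
    also have "\<dots> = L - 1 + (\<integral>G. Z G \<partial>std_gaussian I) / exp L"
      using int_Z by (simp add: prob_space)
    also have "\<dots> \<le> L" using EZ by (simp add: divide_le_eq)
    finally show ?thesis using t by (simp add: pos_le_divide_eq mult.commute)
  next
    case False
    then show ?thesis using L_nonneg t by (simp add: not_integrable_integral_eq)
  qed
qed

definition adj :: "((nat \<times> nat) \<Rightarrow> real) \<Rightarrow> nat \<Rightarrow> nat \<Rightarrow> bool" where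
  "adj y a b \<longleftrightarrow> (if a < b then y (a, b) = 1 else b < a \<and> y (b, a) = 1)"

definition common_neighbours :: "nat \<Rightarrow> ((nat \<times> nat) \<Rightarrow> real) \<Rightarrow> nat \<Rightarrow> nat \<Rightarrow> nat set" where
  "common_neighbours N y i j = {k \<in> {1..N}. adj y i k \<and> adj y j k}"

definition triangle_set :: "nat \<Rightarrow> ((nat \<times> nat) \<Rightarrow> real) \<Rightarrow> (nat \<times> nat \<times> nat) set" where
  "triangle_set N y = {(a, b, c). 1 \<le> a \<and> a < b \<and> b < c \<and> c \<le> N \<and>
      y (a, b) = 1 \<and> y (a, c) = 1 \<and> y (b, c) = 1}"

definition triples_through :: "nat \<times> nat \<Rightarrow> (nat \<times> nat \<times> nat) set" where
  "triples_through e = {(a, b, c). (a, b) = e \<or> (a, c) = e \<or> (b, c) = e}"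

definition triangle_with_apex :: "nat \<Rightarrow> nat \<Rightarrow> nat \<Rightarrow> nat \<times> nat \<times> nat" where
  "triangle_with_apex i j k = (if k < i then (k, i, j) else if k < j then (i, k, j) else (i, j, k))"

lemma finite_triangle_set: "finite (triangle_set N y)"
  by (rule finite_subset[of _ "{1..N} \<times> {1..N} \<times> {1..N}"]) (auto simp: triangle_set_def)

lemma triangle_set_upd_minus:
  "triangle_set N (y(e := -1)) = triangle_set N (y(e := 1)) - triples_through e"
  unfolding triangle_set_def triples_through_def by auto

lemma triangle_set_upd_plus_through:
  assumes e: "(i, j) \<in> edges N"
  shows "triangle_set N (y((i, j) := 1)) \<inter> triples_through (i, j)
      = triangle_with_apex i j ` common_neighbours N y i j"
proof
  have ij: "1 \<le> i" "i < j" "j \<le> N" using e by (auto simp: edges_def)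
  show "triangle_set N (y((i, j) := 1)) \<inter> triples_through (i, j)
      \<subseteq> triangle_with_apex i j ` common_neighbours N y i j"
  proof
    fix t assume t: "t \<in> triangle_set N (y((i, j) := 1)) \<inter> triples_through (i, j)"
    obtain a b c where abc: "t = (a, b, c)" by (cases t)
    consider "(a, b) = (i, j)" | "(a, c) = (i, j)" | "(b, c) = (i, j)"
      using t abc by (auto simp: triples_through_def)
    then obtain k where "t = triangle_with_apex i j k" "k \<in> common_neighbours N y i j"
    proof cases
      case 1 then show ?thesis
        using that[of c] t abc ij by (auto simp: triangle_set_def triangle_with_apex_def common_neighbours_def adj_def)
    next
      case 2 then show ?thesis
        using that[of b] t abc ij by (auto simp: triangle_set_def triangle_with_apex_def common_neighbours_def adj_def)
    next
      case 3 then show ?thesis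
        using that[of a] t abc ij by (auto simp: triangle_set_def triangle_with_apex_def common_neighbours_def adj_def)
    qed
    then show "t \<in> triangle_with_apex i j ` common_neighbours N y i j" by blast
  qed
  show "triangle_with_apex i j ` common_neighbours N y i j
      \<subseteq> triangle_set N (y((i, j) := 1)) \<inter> triples_through (i, j)"
    using ij by (auto simp: triangle_set_def triangle_with_apex_def common_neighbours_def adj_def
        triples_through_def split: if_splits)
qed

lemma inj_on_triangle_with_apex: "inj_on (triangle_with_apex i j) (common_neighbours N y i j)"
proof
  fix k l assume "k \<in> common_neighbours N y i j" "l \<in> common_neighbours N y i j"
    and "triangle_with_apex i j k = triangle_with_apex i j l"
  moreover from calculation have "k \<noteq> i" "k \<noteq> j" "l \<noteq> i" "l \<noteq> j"
    by (auto simp: common_neighbours_def adj_def)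
  ultimately show "k = l" by (auto simp: triangle_with_apex_def split: if_splits)
qed

lemma triangles_upd_diff:
  assumes e: "(i, j) \<in> edges N"
  shows "real (triangles N (y((i, j) := 1))) - real (triangles N (y((i, j) := -1)))
       = real (card (common_neighbours N y i j))"
proof -
  let ?T = "triangle_set N (y((i, j) := 1))" and ?H = "triples_through (i, j)"
  have "card ?T = card (?T - ?H) + card (?T \<inter> ?H)"
    by (metis card_Int_Diff finite_triangle_set add.commute)
  also have "card (?T \<inter> ?H) = card (common_neighbours N y i j)"
    using triangle_set_upd_plus_through[OF e] card_image[OF inj_on_triangle_with_apex] by simp
  finally show ?thesis
    unfolding triangles_def triangle_set_def[symmetric] triangle_set_upd_minus
    by (metis add_diff_cancel_left' of_nat_add)
qed

definition clique_indicator :: "nat set \<Rightarrow> nat \<times> nat \<Rightarrow> real" where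
  "clique_indicator S e = (if fst e \<in> S \<and> snd e \<in> S then 1 else 0)"

definition neighbourhood :: "nat \<Rightarrow> ((nat \<times> nat) \<Rightarrow> real) \<Rightarrow> nat \<Rightarrow> nat set" where
  "neighbourhood N y k = {a \<in> {1..N}. adj y a k}"

definition scaled_triangles :: "nat \<Rightarrow> ((nat \<times> nat) \<Rightarrow> real) \<Rightarrow> real" where
  "scaled_triangles N y = real (triangles N y) / real N"

lemma finite_edges: "finite (edges N)"
  by (rule finite_subset[of _ "{1..N} \<times> {1..N}"]) (auto simp: edges_def)

lemma card_edges_le: "card (edges N) \<le> N\<^sup>2"
proof -
  have "card (edges N) \<le> card ({1..N} \<times> {1..N})"
    by (rule card_mono) (auto simp: edges_def)
  then show ?thesis by (simp add: power2_eq_square)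
qed

lemma card_common_neighbours_le: "card (common_neighbours N y i j) \<le> N"
proof -
  have "card (common_neighbours N y i j) \<le> card {1..N}"
    by (rule card_mono) (auto simp: common_neighbours_def)
  then show ?thesis by simp
qed

lemma dpartial_scaled_triangles:
  assumes "(i, j) \<in> edges N"
  shows "dpartial (scaled_triangles N) (i, j) y = real (card (common_neighbours N y i j)) / (2 * real N)"
  using triangles_upd_diff[OF assms, of y]
  unfolding dpartial_def scaled_triangles_def by (simp add: diff_divide_distrib[symmetric])

lemma card_common_neighbours_eq_sum:
  assumes "(i, j) \<in> edges N"
  shows "real (card (common_neighbours N y i j))
      = (\<Sum>k\<in>{1..N}. clique_indicator (neighbourhood N y k) (i, j))"
proof -
  have "i \<in> {1..N}" "j \<in> {1..N}" using assms by (auto simp: edges_def)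
  then have "{1..N} \<inter> {k. i \<in> neighbourhood N y k \<and> j \<in> neighbourhood N y k}
      = common_neighbours N y i j"
    by (auto simp: neighbourhood_def common_neighbours_def)
  then show ?thesis
    by (simp add: sum.If_cases clique_indicator_def)
qed

lemma inner_dgrad_scaled_triangles_eq:
  assumes "N > 0"
  shows "2 * real N * (\<Sum>e\<in>edges N. dgrad N (scaled_triangles N) y e * G e)
      = (\<Sum>k\<in>{1..N}. \<Sum>e\<in>edges N. clique_indicator (neighbourhood N y k) e * G e)"
proof -
  have "2 * real N * (\<Sum>e\<in>edges N. dgrad N (scaled_triangles N) y e * G e)
      = (\<Sum>e\<in>edges N. \<Sum>k\<in>{1..N}. clique_indicator (neighbourhood N y k) e * G e)"
    unfolding sum_distrib_left
  proof (rule sum.cong)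
    fix e assume "e \<in> edges N"
    moreover obtain i j where "e = (i, j)" by (cases e)
    ultimately show "2 * real N * (dgrad N (scaled_triangles N) y e * G e)
        = (\<Sum>k\<in>{1..N}. clique_indicator (neighbourhood N y k) e * G e)"
      using assms by (simp add: dgrad_def dpartial_scaled_triangles
          card_common_neighbours_eq_sum sum_distrib_right)
  qed simp
  also have "\<dots> = (\<Sum>k\<in>{1..N}. \<Sum>e\<in>edges N. clique_indicator (neighbourhood N y k) e * G e)"
    by (rule sum.swap)
  finally show ?thesis .
qed

lemma inner_dgrad_scaled_triangles_le_clique:
  assumes "N > 0"
  shows "\<exists>S\<in>Pow {1..N}. (\<Sum>e\<in>edges N. dgrad N (scaled_triangles N) y e * G e)
      \<le> (\<Sum>e\<in>edges N. clique_indicator S e / 2 * G e)"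
proof -
  define w where "w S = (\<Sum>e\<in>edges N. clique_indicator S e * G e)" for S
  have "(MAX k\<in>{1..N}. w (neighbourhood N y k)) \<in> (\<lambda>k. w (neighbourhood N y k)) ` {1..N}"
    using assms by (intro Max_in) auto
  then obtain m where m: "m \<in> {1..N}" "(MAX k\<in>{1..N}. w (neighbourhood N y k)) = w (neighbourhood N y m)"
    by blast
  have "w (neighbourhood N y k) \<le> w (neighbourhood N y m)" if "k \<in> {1..N}" for k
    using that unfolding m(2)[symmetric] by (intro Max_ge) auto
  then have "(\<Sum>k\<in>{1..N}. w (neighbourhood N y k)) \<le> real N * w (neighbourhood N y m)"
    using sum_bounded_above[of "{1..N}" "\<lambda>k. w (neighbourhood N y k)"] by simp
  then have "real N * (2 * (\<Sum>e\<in>edges N. dgrad N (scaled_triangles N) y e * G e))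
      \<le> real N * w (neighbourhood N y m)"
    using inner_dgrad_scaled_triangles_eq[OF assms, of y G] by (simp add: w_def mult.assoc)
  then have "(\<Sum>e\<in>edges N. dgrad N (scaled_triangles N) y e * G e) \<le> w (neighbourhood N y m) / 2"
    using assms by simp
  moreover have "neighbourhood N y m \<in> Pow {1..N}" by (auto simp: neighbourhood_def)
  ultimately show ?thesis
    by (intro bexI[of _ "neighbourhood N y m"]) (simp_all add: w_def sum_divide_distrib)
qed

lemma Lip_scaled_triangles_le:
  assumes "N \<ge> 2"
  shows "Lip N (scaled_triangles N) \<le> 1 / 2"
proof -
  let ?A = "{\<bar>dpartial (scaled_triangles N) e y\<bar> | e y. e \<in> edges N \<and> y \<in> cube N}"
  have "?A = (\<lambda>(e, y). \<bar>dpartial (scaled_triangles N) e y\<bar>) ` (edges N \<times> cube N)" by auto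
  then have "finite ?A" by (simp add: cube_def finite_edges finite_PiE)
  moreover have "?A \<noteq> {}"
  proof -
    have "(1, 2) \<in> edges N" "(\<lambda>e\<in>edges N. 1) \<in> cube N"
      using assms by (auto simp: edges_def cube_def)
    then show ?thesis by blast
  qed
  moreover have "a \<le> 1 / 2" if "a \<in> ?A" for a
  proof -
    obtain e y where "a = \<bar>dpartial (scaled_triangles N) e y\<bar>" "e \<in> edges N"
      using \<open>a \<in> ?A\<close> by blast
    moreover obtain i j where "e = (i, j)" by (cases e)
    ultimately have a: "a = \<bar>dpartial (scaled_triangles N) (i, j) y\<bar>" "(i, j) \<in> edges N"
      by simp_all
    have "real (card (common_neighbours N y i j)) / (2 * real N) \<le> real N / (2 * real N)"
      using card_common_neighbours_le by (intro divide_right_mono) auto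
    then show ?thesis using a assms by (simp add: dpartial_scaled_triangles)
  qed
  ultimately show ?thesis unfolding Lip_def by (intro Max.boundedI) auto
qed

text \<open>With \<open>t = 2 / \<surd>N\<close> in the exponential-moment bound, the \<open>2\<^sup>N\<close> cliques cost \<open>N\<close> and
  their norms \<open>N\<^sup>2 / 4\<close> cost \<open>N / 2\<close>.\<close>
lemma DD_scaled_triangles_le:
  assumes "N > 0"
  shows "DD N (scaled_triangles N) \<le> 3 / 4 * real N * sqrt (real N)"
proof -
  define K where "K = dgrad N (scaled_triangles N) ` cube N \<union> {\<lambda>e\<in>edges N. 0}"
  define A where "A = (\<lambda>S e. clique_indicator S e / 2) ` Pow {1..N}"
  define t where "t = 2 / sqrt (real N)"
  have "finite K" using finite_edges by (auto simp: K_def cube_def intro: finite_PiE)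
  have dominated: "\<exists>a\<in>A. (SUP x\<in>K. \<Sum>e\<in>edges N. x e * G e) \<le> (\<Sum>e\<in>edges N. a e * G e)" for G
  proof -
    have "(SUP x\<in>K. \<Sum>e\<in>edges N. x e * G e) = (MAX x\<in>K. \<Sum>e\<in>edges N. x e * G e)"
      using \<open>finite K\<close> by (intro cSup_eq_Max) (auto simp: K_def)
    also have "\<dots> \<in> (\<lambda>x. \<Sum>e\<in>edges N. x e * G e) ` K"
      using \<open>finite K\<close> by (intro Max_in) (auto simp: K_def)
    finally have "(SUP x\<in>K. \<Sum>e\<in>edges N. x e * G e) \<in> (\<lambda>x. \<Sum>e\<in>edges N. x e * G e) ` K" .
    then obtain x where x: "x \<in> K" "(SUP x\<in>K. \<Sum>e\<in>edges N. x e * G e) = (\<Sum>e\<in>edges N. x e * G e)"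
      by auto
    show ?thesis
    proof (cases "x = (\<lambda>e\<in>edges N. 0)")
      case True
      then show ?thesis using x by (auto simp: A_def clique_indicator_def intro!: bexI[of _ "{}"])
    next
      case False
      then show ?thesis
        using x inner_dgrad_scaled_triangles_le_clique[OF assms] by (auto simp: K_def A_def)
    qed
  qed
  have norm: "(\<Sum>e\<in>edges N. (a e)\<^sup>2) \<le> real N ^ 2 / 4" if "a \<in> A" for a
  proof -
    have "(\<Sum>e\<in>edges N. (a e)\<^sup>2) \<le> (\<Sum>e\<in>edges N. 1 / 4)"
      using that by (intro sum_mono) (auto simp: A_def clique_indicator_def power2_eq_square)
    also have "\<dots> \<le> real N ^ 2 / 4"
      using card_edges_le[of N] by (simp flip: of_nat_power)
    finally show ?thesis .
  qed
  have "finite A" "A \<noteq> {}" by (auto simp: A_def)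
  have "t > 0" using assms by (simp add: t_def)
  have card_A: "real (card A) * exp (t\<^sup>2 * (real N ^ 2 / 4) / 2) \<le> exp (3 / 2 * real N)"
  proof -
    have "real (card A) \<le> 2 ^ N"
      using card_image_le[of "Pow {1..N}" "\<lambda>S e. clique_indicator S e / 2"]
      by (simp add: A_def card_Pow flip: of_nat_power)
    also have "(2::real) ^ N \<le> exp 1 ^ N"
      using exp_ge_add_one_self[of 1] by (intro power_mono) auto
    also have "\<dots> = exp (real N)" by (simp flip: exp_of_nat_mult)
    finally have "real (card A) \<le> exp (real N)" .
    moreover have "t\<^sup>2 * (real N ^ 2 / 4) / 2 = real N / 2"
      using assms by (simp add: t_def power_divide power2_eq_square)
    moreover have "exp (3 / 2 * real N) = exp (real N) * exp (real N / 2)"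
      by (simp flip: exp_add)
    ultimately show ?thesis by (simp add: mult_right_mono)
  qed
  have "DD N (scaled_triangles N) \<le> 3 / 2 * real N / t"
    unfolding DD_def GW_def K_def[symmetric]
    by (rule integral_std_gaussian_le_finite_family
        [OF finite_edges \<open>finite A\<close> \<open>A \<noteq> {}\<close> norm \<open>t > 0\<close> card_A dominated])
  also have "\<dots> = 3 / 4 * real N * sqrt (real N)" by (simp add: t_def)
  finally show ?thesis .
qed

lemma N_sqrt_N_le_choose_two_powr:
  assumes "N \<ge> 2"
  shows "3 / 4 * real N * sqrt (real N) \<le> 5 * real (N choose 2) powr (3 / 4)"
proof -
  have "2 * real N \<le> real N * real N"
    using assms by (intro mult_right_mono) auto
  moreover have "real (N choose 2) = real N * (real N - 1) / 2"
    by (simp add: binomial_gbinomial gbinomial_pochhammer numeral_2_eq_2 pochhammer_Suc algebra_simps)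
  ultimately have "(real N)\<^sup>2 \<le> 4 * real (N choose 2)"
    by (simp add: power2_eq_square algebra_simps)
  have "real N * sqrt (real N) = real N powr 1 * real N powr (1 / 2)"
    using assms by (simp add: powr_half_sqrt)
  also have "\<dots> = real N powr (3 / 2)"
    by (subst powr_add[symmetric]) simp
  also have "\<dots> = (real N powr 2) powr (3 / 4)"
    by (subst powr_powr) simp
  also have "\<dots> = ((real N)\<^sup>2) powr (3 / 4)"
    by simp
  also have "\<dots> \<le> (4 * real (N choose 2)) powr (3 / 4)"
    using \<open>(real N)\<^sup>2 \<le> 4 * real (N choose 2)\<close> by (intro powr_mono2) auto
  also have "\<dots> = 4 powr (3 / 4) * real (N choose 2) powr (3 / 4)"
    by (simp add: powr_mult)
  also have "\<dots> \<le> 4 * real (N choose 2) powr (3 / 4)"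
    by (intro mult_right_mono order_trans[OF powr_mono[of "3/4" 1]]) auto
  finally show ?thesis
    using powr_ge_zero[of "real (N choose 2)" "3 / 4"] by linarith
qed

theorem fact1p10:
  fixes N :: nat
  assumes "N \<ge> 2"
  defines "n \<equiv> N choose 2"
  defines "f \<equiv> (\<lambda>y. real (triangles N y) / real N)"
  shows "DD N f \<le> 5 * real n powr (3/4) \<and> Lip N f \<le> 1"
proof -
  have f: "f = scaled_triangles N" by (simp add: f_def scaled_triangles_def[abs_def])
  show ?thesis
    using DD_scaled_triangles_le[of N] Lip_scaled_triangles_le[OF assms(1)]
      N_sqrt_N_le_choose_two_powr[OF assms(1)] assms(1)
    unfolding f n_def by linarith
qed

end
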